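(* Let $k$ be a field, $U$ a $d$-dimensional $k$-vector space, and $\phi_3$ a nonzero element of $D_3U^*$. Then there exist a unit $\alpha$ of $k$ and a basis $x_1^*,\dots,x_d^*$ of $U^*$ such that (a) $\alpha\phi_3=x_1^{*(3)}+x_1^*\phi_{2,0}+\phi_{3,0}$, or (b) $\alpha\phi_3=x_1^{*(2)}x_2^*+x_1^*\phi_{2,0}+\phi_{3,0}$, or (c) $k$ has characteristic two and $\phi_3=\sum_{1\le i<j<l\le d}\alpha_{i,j,l}\,x_i^*x_j^*x_l^*$ for some $\alpha_{i,j,l}\in k$, where in (a) and (b) $\phi_{i,0}$ is an element of $D_i\big(\bigoplus_{2\le j\le d}k\,x_j^*\big)$ for $i=2,3$.
   Context: $U^*=\operatorname{Hom}_k(U,k)$ and $D_\bullet U^*=\bigoplus_iD_iU^*$, $D_iU^*=\operatorname{Hom}_k(\operatorname{Sym}_iU,k)$, is the divided power algebra of $U^*$. For $v\in U^*$, $v^{(n)}$ denotes the $n$-th divided power (behaving like $v^n/n!$); for a basis $x_1^*,\dots,x_d^*$ of $U^*$ dual to a basis $x_1,\dots,x_d$ of $U$, $x_1^{*(a_1)}\cdots x_d^{*(a_d)}$ is the functional taking value $1$ on the monomial $x_1^{a_1}\cdots x_d^{a_d}$ and $0$ on the other monomials of the same degree; factors written without parenthesized exponent have exponent one. For a subspace $W\subseteq U^*$, $D_iW$ is the subspace of $D_iU^*$ generated by products of $i$ elements of $W$ (in the divided power sense). *)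

theory Defs
  imports Main "HOL-Library.Multiset" "HOL-Library.Cardinality"
begin

text \<open>The d-dimensional space U is modelled as coordinate vectors 'n => 'a,
  with d = CARD('n). Elements of D_i U* = Hom(Sym_i U, k) are modelled as
  symmetric multilinear forms in i arguments, i.e. as functions on lists of
  vectors which vanish on lists of length different from i.\<close>

definition lin_fun :: "(('n \<Rightarrow> 'a::field) \<Rightarrow> 'a) \<Rightarrow> bool" where
  "lin_fun f \<longleftrightarrow> (\<forall>u v. f (\<lambda>i. u i + v i) = f u + f v) \<and> (\<forall>c u. f (\<lambda>i. c * u i) = c * f u)"

definition dual_space :: "(('n \<Rightarrow> 'a::field) \<Rightarrow> 'a) set" where
  "dual_space = {f. lin_fun f}"

definition is_dual_basis :: "nat \<Rightarrow> (nat \<Rightarrow> ('n \<Rightarrow> 'a::field) \<Rightarrow> 'a) \<Rightarrow> bool" where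
  "is_dual_basis d xs \<longleftrightarrow>
     (\<forall>i\<in>{1..d}. xs i \<in> dual_space) \<and>
     (\<forall>c. (\<forall>u. (\<Sum>i=1..d. c i * xs i u) = 0) \<longrightarrow> (\<forall>i\<in>{1..d}. c i = 0)) \<and>
     (\<forall>f\<in>dual_space. \<exists>c. f = (\<lambda>u. \<Sum>i=1..d. c i * xs i u))"

definition Dsp :: "nat \<Rightarrow> (('n \<Rightarrow> 'a::field) list \<Rightarrow> 'a) set" where
  "Dsp n = {f. (\<forall>us. length us \<noteq> n \<longrightarrow> f us = 0) \<and>
     (\<forall>us j u v. length us = n \<longrightarrow> j < n \<longrightarrow>
        f (us[j := (\<lambda>i. u i + v i)]) = f (us[j := u]) + f (us[j := v])) \<and>
     (\<forall>us j c u. length us = n \<longrightarrow> j < n \<longrightarrow>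
        f (us[j := (\<lambda>i. c * u i)]) = c * f (us[j := u])) \<and>
     (\<forall>us vs. mset us = mset vs \<longrightarrow> f us = f vs)}"

definition dpow :: "(('n \<Rightarrow> 'a::field) \<Rightarrow> 'a) \<Rightarrow> nat \<Rightarrow> ('n \<Rightarrow> 'a) list \<Rightarrow> 'a" where
  "dpow v n = (\<lambda>us. if length us = n then prod_list (map v us) else 0)"

text \<open>Multiplication D_p U* x D_q U* -> D_(p+q) U* of the divided power algebra
  (shuffle product of symmetric multilinear forms).\<close>
definition dmult :: "nat \<Rightarrow> nat \<Rightarrow> (('n \<Rightarrow> 'a::field) list \<Rightarrow> 'a) \<Rightarrow> (('n \<Rightarrow> 'a) list \<Rightarrow> 'a)
     \<Rightarrow> ('n \<Rightarrow> 'a) list \<Rightarrow> 'a" where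
  "dmult p q f g = (\<lambda>us. if length us = p + q then
      (\<Sum>S\<in>{S. S \<subseteq> {0..<p+q} \<and> card S = p}. f (nths us S) * g (nths us ({0..<p+q} - S)))
     else 0)"

fun dmono :: "((('n \<Rightarrow> 'a::field) \<Rightarrow> 'a) \<times> nat) list \<Rightarrow> ('n \<Rightarrow> 'a) list \<Rightarrow> 'a" where
  "dmono [] = (\<lambda>us. if us = [] then 1 else 0)"
| "dmono ((w, a) # ps) = dmult a (sum_list (map snd ps)) (dpow w a) (dmono ps)"

definition Dsub :: "nat \<Rightarrow> (('n \<Rightarrow> 'a::field) \<Rightarrow> 'a) set \<Rightarrow> (('n \<Rightarrow> 'a) list \<Rightarrow> 'a) set" where
  "Dsub n W = {f. \<exists>gs cs. (\<forall>g\<in>set gs. \<exists>ps. set (map fst ps) \<subseteq> W \<and> sum_list (map snd ps) = n \<and> g = dmono ps)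
        \<and> f = (\<lambda>us. \<Sum>j<length gs. cs j * (gs ! j) us)}"

definition span_from2 :: "nat \<Rightarrow> (nat \<Rightarrow> ('n \<Rightarrow> 'a::field) \<Rightarrow> 'a) \<Rightarrow> (('n \<Rightarrow> 'a) \<Rightarrow> 'a) set" where
  "span_from2 d xs = {f. \<exists>c. f = (\<lambda>u. \<Sum>j=2..d. c j * xs j u)}"

end

theory Submission
  imports Defs "HOL-Combinatorics.Permutations"
begin

text \<open>
  Let \<open>phi\<close> be the symmetric trilinear form given by \<open>phi\<^sub>3\<close>. For a basis \<open>e\<^sub>1, ..., e\<^sub>d\<close> of \<open>U\<close>
  with dual basis \<open>x\<^sub>1, ..., x\<^sub>d\<close>, write every vector as \<open>v = x\<^sub>1(v) e\<^sub>1 + P v\<close> with \<open>P\<close> the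
  projection onto the span of \<open>e\<^sub>2, ..., e\<^sub>d\<close>. Trilinearity gives
  \<open>phi = phi(e\<^sub>1,e\<^sub>1,e\<^sub>1) x\<^sub>1\<^sup>(\<^sup>3\<^sup>) + x\<^sub>1\<^sup>(\<^sup>2\<^sup>) l + x\<^sub>1 phi\<^sub>2\<^sub>0 + phi\<^sub>3\<^sub>0\<close>, where \<open>l(v) = phi(e\<^sub>1,e\<^sub>1,P v)\<close>
  and \<open>phi\<^sub>2\<^sub>0\<close>, \<open>phi\<^sub>3\<^sub>0\<close>, the pullbacks of \<open>phi(e\<^sub>1,-,-)\<close> and \<open>phi\<close> along \<open>P\<close>, lie in
  \<open>D\<^sub>2\<close> and \<open>D\<^sub>3\<close> of the span of \<open>x\<^sub>2, ..., x\<^sub>d\<close>.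

  If \<open>phi(u,u,u) \<noteq> 0\<close> for some \<open>u\<close>, take \<open>e\<^sub>1 = u\<close> and \<open>e\<^sub>2, ..., e\<^sub>d\<close> in the kernel of
  \<open>phi(u,u,-)\<close>; then \<open>l = 0\<close>, which is case (a). If \<open>phi(v,v,v) = 0\<close> for all \<open>v\<close> but
  \<open>phi(u,u,w) \<noteq> 0\<close>, take \<open>e\<^sub>1 = u\<close>, some \<open>e\<^sub>2\<close> with \<open>phi(u,u,e\<^sub>2) \<noteq> 0\<close> and the other \<open>e\<^sub>j\<close>
  in the kernel of \<open>phi(u,u,-)\<close>; then \<open>l\<close> is a multiple of \<open>x\<^sub>2\<close> and \<open>phi(e\<^sub>1,e\<^sub>1,e\<^sub>1) = 0\<close>,
  which is case (b). Otherwise \<open>phi(u,u,v)\<close> vanishes identically, so polarisation gives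
  \<open>2 phi = 0\<close> and hence \<open>char k = 2\<close>; moreover only the monomials \<open>x\<^sub>i x\<^sub>j x\<^sub>l\<close> with distinct
  indices survive in the expansion of \<open>phi\<close>, which is case (c).
\<close>

section \<open>Products in the divided power algebra\<close>

text \<open>The index sets of \<^const>\<open>dmult\<close> on short lists, stated in the shape produced by
  unfolding \<^const>\<open>dmult\<close>.\<close>

lemma subsets_card_1_of_2: "{S. S \<subseteq> {0..<1 + 1::nat} \<and> card S = 1} = {{0}, {1}}"
  by (auto simp: card_1_singleton_iff)

lemma subsets_card_1_of_3: "{S. S \<subseteq> {0..<1 + 2::nat} \<and> card S = 1} = {{0}, {1}, {2}}"
  by (auto simp: card_1_singleton_iff)

lemma subsets_card_2_of_3: "{S. S \<subseteq> {0..<2 + 1::nat} \<and> card S = 2} = {{0, 1}, {0, 2}, {1, 2}}"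
proof (intro equalityI subsetI)
  fix S assume "S \<in> {S. S \<subseteq> {0..<2 + 1::nat} \<and> card S = 2}"
  then obtain x y where "S = {x, y}" "x \<noteq> y" "x < 3" "y < 3"
    by (auto simp: card_2_iff)
  then show "S \<in> {{0, 1}, {0, 2}, {1, 2}}"
    by (auto simp: less_Suc_eq numeral_eq_Suc insert_commute)
qed auto

lemma subsets_card_all: "{S. S \<subseteq> {0..<n::nat} \<and> card S = n} = {{0..<n}}"
  using card_subset_eq[of "{0..<n}"] by auto

lemma dmult_eq_0_if_length_ne: "length us \<noteq> p + q \<Longrightarrow> dmult p q f g us = 0"
  by (simp add: dmult_def)

lemma dmult_1_1: "dmult 1 1 f g [b, c] = f [b] * g [c] + f [c] * g [b]"
  unfolding dmult_def subsets_card_1_of_2 by (simp add: nths_Cons numeral_eq_Suc)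

lemma dmult_1_2: "dmult 1 2 f g [a, b, c] = f [a] * g [b, c] + f [b] * g [a, c] + f [c] * g [a, b]"
  unfolding dmult_def subsets_card_1_of_3 by (simp add: nths_Cons numeral_eq_Suc)

lemma dmult_2_1: "dmult 2 1 f g [a, b, c] = f [a, b] * g [c] + f [a, c] * g [b] + f [b, c] * g [a]"
  unfolding dmult_def subsets_card_2_of_3
  by (simp add: nths_Cons numeral_eq_Suc doubleton_eq_iff add.assoc)

lemma dmult_0_right: "dmult n 0 f g us = (if length us = n then f us * g [] else 0)"
  by (auto simp: dmult_def subsets_card_all nths_all)

lemma dmult_scale_right: "dmult p q f (\<lambda>us. k * g us) us = k * dmult p q f g us"
  unfolding dmult_def by (simp add: sum_distrib_left mult.left_commute)

lemma dmult_sum_right: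
  "dmult p q f (\<lambda>us. \<Sum>j\<in>J. c j * g j us) = (\<lambda>us. \<Sum>j\<in>J. c j * dmult p q f (g j) us)"
proof
  fix us
  have "(\<Sum>S\<in>A. f (nths us S) * (\<Sum>j\<in>J. c j * h j S)) = (\<Sum>j\<in>J. c j * (\<Sum>S\<in>A. f (nths us S) * h j S))"
    for A :: "nat set set" and h
    by (simp add: sum_distrib_left mult.left_commute sum.swap[of _ A])
  then show "dmult p q f (\<lambda>us. \<Sum>j\<in>J. c j * g j us) us = (\<Sum>j\<in>J. c j * dmult p q f (g j) us)"
    by (simp add: dmult_def)
qed

lemma dpow_scale_1: "dpow (\<lambda>v. k * w v) 1 = (\<lambda>us. k * dpow w 1 us)"
  by (auto simp: dpow_def fun_eq_iff length_Suc_conv)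

lemma dmono_singleton: "dmono [(v, n)] = dpow v n"
  by (simp add: fun_eq_iff dmult_0_right dpow_def)

lemma dmult_1_2_dpow_1_1:
  "dmult 1 2 (dpow f 1) (dmult 1 1 (dpow g 1) (dpow h 1)) [a, b, c] =
     f a * (g b * h c + g c * h b) + f b * (g a * h c + g c * h a) + f c * (g a * h b + g b * h a)"
  unfolding dmult_1_2 dmult_1_1 by (simp add: dpow_def)

lemma sum_dmult_1_2_dpow_last:
  "(\<Sum>(i, j)\<in>A. w i j * dmult 1 2 (dpow (f i) 1) (dmult 1 1 (dpow (g j) 1) (dpow h 1)) [a, b, c])
     = h a * (\<Sum>(i, j)\<in>A. w i j * (f i b * g j c + g j b * f i c))
     + h b * (\<Sum>(i, j)\<in>A. w i j * (f i a * g j c + g j a * f i c))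
     + h c * (\<Sum>(i, j)\<in>A. w i j * (f i a * g j b + g j a * f i b))"
  unfolding dmult_1_2_dpow_1_1 sum_distrib_left sum.distrib[symmetric]
  by (rule sum.cong) (auto simp: algebra_simps)

lemma length_2_cases: "length us = 2 \<Longrightarrow> \<exists>b c. us = [b, c]"
  by (auto simp: numeral_2_eq_2 length_Suc_conv)

lemma length_3_cases: "length us = 3 \<Longrightarrow> \<exists>a b c. us = [a, b, c]"
  by (auto simp: numeral_3_eq_3 length_Suc_conv)

lemma list_fun_eqI2:
  assumes "\<And>us. length us \<noteq> 2 \<Longrightarrow> f us = g us" and "\<And>b c. f [b, c] = g [b, c]"
  shows "f = g"
  using assms length_2_cases by (metis ext)

lemma list_fun_eqI3:
  assumes "\<And>us. length us \<noteq> 3 \<Longrightarrow> f us = g us" and "\<And>a b c. f [a, b, c] = g [a, b, c]"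
  shows "f = g"
  using assms length_3_cases by (metis ext)

section \<open>The subspaces \<open>D\<^sub>i W\<close>\<close>

lemma Dsub_zero: "(\<lambda>us. 0) \<in> Dsub n W"
  unfolding Dsub_def by (rule CollectI, rule exI[of _ "[]"]) simp

lemma Dsub_add:
  assumes "f \<in> Dsub n W" and "g \<in> Dsub n W"
  shows "(\<lambda>us. f us + g us) \<in> Dsub n W"
proof -
  let ?mono = "\<lambda>h. \<exists>ps. set (map fst ps) \<subseteq> W \<and> sum_list (map snd ps) = n \<and> h = dmono ps"
  obtain fs a where fs: "\<forall>h\<in>set fs. ?mono h" and f: "f = (\<lambda>us. \<Sum>j<length fs. a j * (fs ! j) us)"
    using assms(1) unfolding Dsub_def by blast
  obtain gs b where gs: "\<forall>h\<in>set gs. ?mono h" and g: "g = (\<lambda>us. \<Sum>j<length gs. b j * (gs ! j) us)"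
    using assms(2) unfolding Dsub_def by blast
  define c where "c j = (if j < length fs then a j else b (j - length fs))" for j
  have sum_split: "(\<Sum>j<m + k. h j) = (\<Sum>j<m. h j) + (\<Sum>j<k. h (m + j))" for m k and h :: "nat \<Rightarrow> 'c::comm_monoid_add"
    by (induction k) (simp_all add: add.assoc)
  have "(\<lambda>us. f us + g us) = (\<lambda>us. \<Sum>j<length (fs @ gs). c j * ((fs @ gs) ! j) us)"
    by (simp add: f g c_def sum_split nth_append)
  with fs gs show ?thesis
    unfolding Dsub_def by (intro CollectI exI[of _ "fs @ gs"] exI[of _ c] conjI) auto
qed

lemma Dsub_scale:
  assumes "f \<in> Dsub n W"
  shows "(\<lambda>us. k * f us) \<in> Dsub n W"
proof -
  obtain fs a where fs: "\<forall>h\<in>set fs. \<exists>ps. set (map fst ps) \<subseteq> W \<and> sum_list (map snd ps) = n \<and> h = dmono ps"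
    and f: "f = (\<lambda>us. \<Sum>j<length fs. a j * (fs ! j) us)"
    using assms unfolding Dsub_def by blast
  have "(\<lambda>us. k * f us) = (\<lambda>us. \<Sum>j<length fs. (k * a j) * (fs ! j) us)"
    by (simp add: f sum_distrib_left mult.assoc)
  with fs show ?thesis
    unfolding Dsub_def by (intro CollectI exI[of _ fs] exI[of _ "\<lambda>j. k * a j"] conjI)
qed

lemma dmono_in_Dsub:
  assumes "set (map fst ps) \<subseteq> W" and "sum_list (map snd ps) = n"
  shows "dmono ps \<in> Dsub n W"
proof -
  have "dmono ps = (\<lambda>us. \<Sum>j<length [dmono ps]. 1 * ([dmono ps] ! j) us)"
    by simp
  with assms show ?thesis
    unfolding Dsub_def by (intro CollectI exI[of _ "[dmono ps]"] exI[of _ "\<lambda>_. 1"] conjI) auto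
qed

lemma dpow_in_Dsub: "v \<in> W \<Longrightarrow> dpow v n \<in> Dsub n W"
  using dmono_in_Dsub[of "[(v, n)]" W n] unfolding dmono_singleton by simp

text \<open>The degree is a separate variable \<open>m = a + n\<close> so that the lemma applies directly
  to goals such as \<open>Dsub 3 W\<close>.\<close>

lemma dmult_dpow_in_Dsub:
  assumes v: "v \<in> W" and f: "f \<in> Dsub n W" and m: "m = a + n"
  shows "dmult a n (dpow v a) f \<in> Dsub m W"
proof -
  obtain fs c where fs: "\<forall>h\<in>set fs. \<exists>ps. set (map fst ps) \<subseteq> W \<and> sum_list (map snd ps) = n \<and> h = dmono ps"
    and f: "f = (\<lambda>us. \<Sum>j<length fs. c j * (fs ! j) us)"
    using f unfolding Dsub_def by blast
  let ?gs = "map (dmult a n (dpow v a)) fs"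
  have "dmult a n (dpow v a) f = (\<lambda>us. \<Sum>j<length ?gs. c j * (?gs ! j) us)"
    unfolding f dmult_sum_right by simp
  moreover have "\<exists>ps. set (map fst ps) \<subseteq> W \<and> sum_list (map snd ps) = m \<and> g = dmono ps"
    if "g \<in> set ?gs" for g
  proof -
    obtain ps where "set (map fst ps) \<subseteq> W" "sum_list (map snd ps) = n" "g = dmult a n (dpow v a) (dmono ps)"
      using \<open>g \<in> set ?gs\<close> fs by auto
    with v m show ?thesis
      by (intro exI[of _ "(v, a) # ps"]) auto
  qed
  ultimately show ?thesis
    unfolding Dsub_def by blast
qed

lemma span_from2_lincomb:
  assumes "S \<subseteq> {2..d}"
  shows "(\<lambda>v. \<Sum>j\<in>S. k j * x j v) \<in> span_from2 d x"
proof -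
  have "{2..d} \<inter> {j. j \<in> S} = S"
    using assms by auto
  then have "(\<lambda>v. \<Sum>j\<in>S. k j * x j v) = (\<lambda>v. \<Sum>j=2..d. (of_bool (j \<in> S) * k j) * x j v)"
    by (simp add: mult.assoc)
  then show ?thesis
    unfolding span_from2_def by (intro CollectI exI[of _ "\<lambda>j. of_bool (j \<in> S) * k j"])
qed

lemma span_from2_basis: "j \<in> {2..d} \<Longrightarrow> x j \<in> span_from2 d x"
  using span_from2_lincomb[of "{j}" d "\<lambda>_. 1" x] by simp

section \<open>Bases and coordinate projections\<close>

lemma lin_fun_additive: "lin_fun f \<Longrightarrow> f (\<lambda>i. u i + v i) = f u + f v"
  by (simp add: lin_fun_def)

lemma lin_fun_homogeneous: "lin_fun f \<Longrightarrow> f (\<lambda>i. c * u i) = c * f u"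
  by (simp add: lin_fun_def)

lemma lin_fun_sum:
  assumes f: "lin_fun f" and "finite S"
  shows "f (\<lambda>t. \<Sum>i\<in>S. c i * g i t) = (\<Sum>i\<in>S. c i * f (g i))"
  using \<open>finite S\<close>
proof (induction S rule: finite_induct)
  case empty
  then show ?case
    using lin_fun_homogeneous[OF f, of 0 "\<lambda>_. 0"] by simp
next
  case (insert y F)
  then show ?case
    using lin_fun_additive[OF f, of "\<lambda>t. c y * g y t" "\<lambda>t. \<Sum>i\<in>F. c i * g i t"]
    by (simp add: lin_fun_homogeneous[OF f])
qed

lemma lin_fun_lincomb: "\<forall>i\<in>S. lin_fun (g i) \<Longrightarrow> lin_fun (\<lambda>v. \<Sum>i\<in>S. c i * g i v)"
  unfolding lin_fun_def by (simp add: algebra_simps sum.distrib sum_distrib_left)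

lemma lin_fun_add: "lin_fun f \<Longrightarrow> lin_fun g \<Longrightarrow> lin_fun (\<lambda>v. f v + g v)"
  by (simp add: lin_fun_def algebra_simps)

text \<open>Changes of basis are carried out on a basis \<open>e\<close> of \<open>U\<close> together with its dual basis \<open>x\<close>;
  \<^const>\<open>is_dual_basis\<close> only sees the latter.\<close>

definition coord_basis :: "nat \<Rightarrow> (nat \<Rightarrow> 'n \<Rightarrow> 'a::field) \<Rightarrow> (nat \<Rightarrow> ('n \<Rightarrow> 'a) \<Rightarrow> 'a) \<Rightarrow> bool" where
  "coord_basis d e x \<longleftrightarrow> (\<forall>i\<in>{1..d}. lin_fun (x i)) \<and> (\<forall>v. v = (\<lambda>t. \<Sum>i=1..d. x i v * e i t)) \<and>
     (\<forall>i\<in>{1..d}. \<forall>j\<in>{1..d}. x i (e j) = (if i = j then 1 else 0))"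

lemma coord_basis_lin_fun: "coord_basis d e x \<Longrightarrow> i \<in> {1..d} \<Longrightarrow> lin_fun (x i)"
  by (simp add: coord_basis_def)

lemma coord_basis_expansion:
  assumes "coord_basis d e x"
  shows "v t = (\<Sum>i=1..d. x i v * e i t)"
proof -
  have "v = (\<lambda>t. \<Sum>i=1..d. x i v * e i t)"
    using assms unfolding coord_basis_def by blast
  from fun_cong[OF this, of t] show ?thesis by simp
qed

lemma coord_basis_dual:
  "coord_basis d e x \<Longrightarrow> i \<in> {1..d} \<Longrightarrow> j \<in> {1..d} \<Longrightarrow> x i (e j) = (if i = j then 1 else 0)"
  by (simp add: coord_basis_def)

lemma lin_fun_coord_expansion:
  assumes "coord_basis d e x" and "lin_fun f"
  shows "f v = (\<Sum>i=1..d. x i v * f (e i))"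
proof -
  have "v = (\<lambda>t. \<Sum>i=1..d. x i v * e i t)"
    using coord_basis_expansion[OF assms(1)] by blast
  then have "f v = f (\<lambda>t. \<Sum>i=1..d. x i v * e i t)"
    by (rule arg_cong)
  also have "\<dots> = (\<Sum>i=1..d. x i v * f (e i))"
    by (rule lin_fun_sum[OF assms(2)]) simp
  finally show ?thesis .
qed

lemma coord_basis_is_dual_basis:
  fixes e :: "nat \<Rightarrow> 'n \<Rightarrow> 'a::field"
  assumes B: "coord_basis d e x"
  shows "is_dual_basis d x"
  unfolding is_dual_basis_def dual_space_def
proof (intro conjI ballI allI impI)
  fix i assume "i \<in> {1..d}"
  then show "x i \<in> {f. lin_fun f}"
    using coord_basis_lin_fun[OF B] by simp
next
  fix c j assume zero: "\<forall>u. (\<Sum>i=1..d. c i * x i u) = 0" and j: "j \<in> {1..d}"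
  have "(\<Sum>i=1..d. c i * x i (e j)) = (\<Sum>i=1..d. if i = j then c i else 0)"
    by (rule sum.cong) (simp_all add: coord_basis_dual[OF B _ j])
  with zero j show "c j = 0" by simp
next
  fix f :: "('n \<Rightarrow> 'a) \<Rightarrow> 'a" assume "f \<in> {f. lin_fun f}"
  then show "\<exists>c. f = (\<lambda>u. \<Sum>i=1..d. c i * x i u)"
    using lin_fun_coord_expansion[OF B]
    by (intro exI[of _ "\<lambda>i. f (e i)"]) (auto simp: fun_eq_iff mult.commute)
qed

lemma coord_basis_exists: "\<exists>e x. coord_basis CARD('n::finite) e (x :: nat \<Rightarrow> ('n \<Rightarrow> 'a::field) \<Rightarrow> 'a)"
proof -
  obtain g :: "nat \<Rightarrow> 'n" where g: "bij_betw g {1..CARD('n)} UNIV"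
    using ex_bij_betw_nat_finite_1[OF finite_class.finite_UNIV] by blast
  have "coord_basis CARD('n) (\<lambda>i t. if t = g i then 1 else 0) (\<lambda>i v. v (g i) :: 'a)"
    unfolding coord_basis_def
  proof (intro conjI ballI allI)
    fix v :: "'n \<Rightarrow> 'a"
    have "(\<Sum>i=1..CARD('n). v (g i) * (if t = g i then 1 else 0)) = (\<Sum>s\<in>UNIV. v s * (if t = s then 1 else 0))"
      for t using sum.reindex_bij_betw[OF g, of "\<lambda>s. v s * (if t = s then 1 else 0)"] by simp
    then show "v = (\<lambda>t. \<Sum>i=1..CARD('n). v (g i) * (if t = g i then 1 else 0))"
      by (simp add: fun_eq_iff if_distrib cong: if_cong)
  next
    fix i j assume "i \<in> {1..CARD('n)}" "j \<in> {1..CARD('n)}"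
    then show "(if g i = g j then 1 else 0) = (if i = j then (1::'a) else 0)"
      using bij_betw_imp_inj_on[OF g] by (auto dest: inj_onD)
  qed (simp add: lin_fun_def)
  then show ?thesis by blast
qed

lemma coord_basis_permute:
  assumes B: "coord_basis d e x" and p: "p permutes {1..d}"
  shows "coord_basis d (e \<circ> p) (x \<circ> p)"
  unfolding coord_basis_def
proof (intro conjI ballI allI)
  fix i assume "i \<in> {1..d}"
  then show "lin_fun ((x \<circ> p) i)"
    using coord_basis_lin_fun[OF B] permutes_in_image[OF p] by simp
next
  fix v
  show "v = (\<lambda>t. \<Sum>i=1..d. (x \<circ> p) i v * (e \<circ> p) i t)"
  proof
    fix t
    show "v t = (\<Sum>i=1..d. (x \<circ> p) i v * (e \<circ> p) i t)"
      using coord_basis_expansion[OF B, of v t] sum.permute[OF p, of "\<lambda>i. x i v * e i t"] by simp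
  qed
next
  fix i j assume "i \<in> {1..d}" "j \<in> {1..d}"
  then show "(x \<circ> p) i ((e \<circ> p) j) = (if i = j then 1 else 0)"
    using coord_basis_dual[OF B] permutes_in_image[OF p] permutes_inj[OF p] by (simp add: inj_eq)
qed

text \<open>Expanding \<open>v\<close> in the old basis and each old basis vector in the new one expresses \<open>v\<close>
  in the new basis; duality identifies the coefficients.\<close>

lemma coord_basis_change:
  assumes B: "coord_basis d e x"
    and lin: "\<And>i. i \<in> {1..d} \<Longrightarrow> lin_fun (x' i)"
    and dual: "\<And>i j. i \<in> {1..d} \<Longrightarrow> j \<in> {1..d} \<Longrightarrow> x' i (e' j) = (if i = j then 1 else 0)"
    and span: "\<And>k. k \<in> {1..d} \<Longrightarrow> \<exists>m. e k = (\<lambda>t. \<Sum>j=1..d. m j * e' j t)"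
  shows "coord_basis d e' x'"
  unfolding coord_basis_def
proof (intro conjI ballI allI)
  fix v
  obtain M where M: "\<And>k. k \<in> {1..d} \<Longrightarrow> e k = (\<lambda>t. \<Sum>j=1..d. M k j * e' j t)"
    using span by metis
  define w where "w j = (\<Sum>k=1..d. x k v * M k j)" for j
  have v: "v = (\<lambda>t. \<Sum>j=1..d. w j * e' j t)"
  proof
    fix t
    have "v t = (\<Sum>k=1..d. x k v * (\<Sum>j=1..d. M k j * e' j t))"
      unfolding coord_basis_expansion[OF B, of v t] by (intro sum.cong refl) (simp add: M)
    also have "\<dots> = (\<Sum>j=1..d. w j * e' j t)"
      unfolding w_def sum_distrib_left sum_distrib_right by (subst sum.swap) (simp add: mult.assoc)
    finally show "v t = (\<Sum>j=1..d. w j * e' j t)" .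
  qed
  have "x' i v = w i" if i: "i \<in> {1..d}" for i
  proof -
    have "x' i v = (\<Sum>j=1..d. w j * x' i (e' j))"
      by (subst v) (simp add: lin_fun_sum[OF lin[OF i]])
    also have "\<dots> = (\<Sum>j=1..d. if j = i then w j else 0)"
      by (rule sum.cong) (simp_all add: dual[OF i])
    also have "\<dots> = w i"
      using i by simp
    finally show ?thesis .
  qed
  then show "v = (\<lambda>t. \<Sum>i=1..d. x' i v * e' i t)"
    by (subst v) simp
qed (use lin dual in auto)

lemma sum_split_at: "a \<in> {1..d::nat} \<Longrightarrow> (\<Sum>i=1..d. h i) = h a + (\<Sum>i\<in>{1..d}-{a}. h i)"
  by (rule sum.remove) auto

lemma coord_basis_solve_for:
  assumes B: "coord_basis d e x" and a: "a \<in> {1..d}" and u: "x a u \<noteq> 0"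
  shows "e a t = (u t - (\<Sum>j\<in>{1..d}-{a}. x j u * e j t)) / x a u"
proof -
  have "u t = x a u * e a t + (\<Sum>j\<in>{1..d}-{a}. x j u * e j t)"
    using coord_basis_expansion[OF B, of u t] sum_split_at[OF a, of "\<lambda>j. x j u * e j t"] by simp
  with u show ?thesis
    by (simp add: field_simps)
qed

lemma coord_basis_exchange:
  assumes B: "coord_basis d e x" and a: "a \<in> {1..d}" and u: "x a u \<noteq> 0"
  shows "\<exists>x'. coord_basis d (e(a := u)) x'"
proof -
  have "coord_basis d (e(a := u)) (\<lambda>i v. if i = a then x a v / x a u else x i v - x i u / x a u * x a v)"
  proof (rule coord_basis_change[OF B])
    fix i assume "i \<in> {1..d}"
    then show "lin_fun (\<lambda>v. if i = a then x a v / x a u else x i v - x i u / x a u * x a v)"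
      using coord_basis_lin_fun[OF B] a
      by (cases "i = a") (simp_all add: lin_fun_def algebra_simps add_divide_distrib)
  next
    fix i j assume "i \<in> {1..d}" "j \<in> {1..d}"
    then show "(if i = a then x a ((e(a := u)) j) / x a u else x i ((e(a := u)) j) - x i u / x a u * x a ((e(a := u)) j))
        = (if i = j then 1 else 0)"
      using coord_basis_dual[OF B] a u by auto
  next
    fix k assume k: "k \<in> {1..d}"
    show "\<exists>m. e k = (\<lambda>t. \<Sum>j=1..d. m j * (e(a := u)) j t)"
    proof (cases "k = a")
      case True
      let ?m = "\<lambda>j. if j = a then 1 / x a u else - (x j u / x a u)"
      have "(\<Sum>j=1..d. ?m j * (e(a := u)) j t) = e a t" for t
        unfolding coord_basis_solve_for[OF B a u, of t] by (subst sum_split_at[OF a])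
          (simp add: sum_divide_distrib sum_negf diff_divide_distrib cong: sum.cong_simp)
      then have "e a = (\<lambda>t. \<Sum>j=1..d. ?m j * (e(a := u)) j t)" by simp
      with True show ?thesis by (intro exI[of _ ?m]) simp
    next
      case False
      have "{1..d} \<inter> {j. j = k} = {k}"
        using k by auto
      with False have "e k = (\<lambda>t. \<Sum>j=1..d. of_bool (j = k) * (e(a := u)) j t)"
        by simp
      then show ?thesis by (rule exI[where x = "\<lambda>j. of_bool (j = k)"])
    qed
  qed
  then show ?thesis by blast
qed

lemma lin_fun_diff_scaled: "lin_fun f \<Longrightarrow> f (\<lambda>t. u t - c * v t) = f u - c * f v"
  using lin_fun_additive[of f u "\<lambda>t. (- c) * v t"] lin_fun_homogeneous[of f "- c" v] by simp

lemma coord_basis_shear: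
  assumes B: "coord_basis d e x" and a: "a \<in> {1..d}"
  shows "\<exists>x'. coord_basis d (\<lambda>j. if j = a then e a else (\<lambda>t. e j t - c j * e a t)) x'"
proof -
  let ?e = "\<lambda>j. if j = a then e a else (\<lambda>t. e j t - c j * e a t)"
  let ?x = "\<lambda>i. if i = a then (\<lambda>v. x a v + (\<Sum>j\<in>{1..d}-{a}. c j * x j v)) else x i"
  have "coord_basis d ?e ?x"
  proof (rule coord_basis_change[OF B])
    fix i assume "i \<in> {1..d}"
    then show "lin_fun (?x i)"
      using coord_basis_lin_fun[OF B] a by (auto intro!: lin_fun_add lin_fun_lincomb)
  next
    have x_e: "x k (?e j) = (if k = j then 1 else 0) - (if j = a then 0 else c j * (if k = a then 1 else 0))"
      if "k \<in> {1..d}" "j \<in> {1..d}" for k j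
      using that a coord_basis_dual[OF B] lin_fun_diff_scaled[OF coord_basis_lin_fun[OF B, of k]] by auto
    fix i j assume i: "i \<in> {1..d}" and j: "j \<in> {1..d}"
    show "?x i (?e j) = (if i = j then 1 else 0)"
    proof (cases "i = a")
      case True
      have "(\<Sum>k\<in>{1..d}-{a}. c k * x k (?e j)) = (\<Sum>k\<in>{1..d}-{a}. if k = j then c j else 0)"
        by (rule sum.cong) (use j in \<open>auto simp: x_e\<close>)
      also have "\<dots> = (if j = a then 0 else c j)"
        using j by simp
      finally show ?thesis
        using True a j by (simp add: x_e)
    qed (use i j x_e in simp)
  next
    fix k assume k: "k \<in> {1..d}"
    define m where "m j = of_bool (j = k) + of_bool (j = a) * (if k = a then 0 else c k)" for j
    have "e k = (\<lambda>t. \<Sum>j=1..d. m j * ?e j t)"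
      using k a by (simp add: m_def fun_eq_iff distrib_right sum.distrib mult.assoc)
    then show "\<exists>m. e k = (\<lambda>t. \<Sum>j=1..d. m j * ?e j t)"
      by (rule exI[of _ m])
  qed
  then show ?thesis by blast
qed

lemma coord_basis_with_first:
  fixes e :: "nat \<Rightarrow> 'n \<Rightarrow> 'a::field" and u :: "'n \<Rightarrow> 'a"
  assumes B: "coord_basis d e x" and d: "1 \<le> d" and u: "u \<noteq> (\<lambda>t. 0)"
  shows "\<exists>e' x'. coord_basis d e' x' \<and> e' 1 = u"
proof -
  obtain a where a: "a \<in> {1..d}" and xa: "x a u \<noteq> 0"
    using u coord_basis_expansion[OF B, of u] by fastforce
  have one: "1 \<in> {1..d}"
    using d by simp
  have "coord_basis d (e \<circ> transpose a 1) (x \<circ> transpose a 1)"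
    by (rule coord_basis_permute[OF B permutes_swap_id[OF a one]])
  moreover have "(x \<circ> transpose a 1) 1 u \<noteq> 0"
    using xa by simp
  ultimately obtain x' where "coord_basis d ((e \<circ> transpose a 1)(1 := u)) x'"
    using coord_basis_exchange[OF _ one] by blast
  then show ?thesis
    by (intro exI[of _ "(e \<circ> transpose a 1)(1 := u)"] exI[of _ x']) simp
qed

lemma coord_basis_annihilate:
  assumes B: "coord_basis d e x" and a: "a \<in> {1..d}" and l: "lin_fun l" and la: "l (e a) \<noteq> 0"
  shows "\<exists>e' x'. coord_basis d e' x' \<and> e' a = e a \<and> (\<forall>j\<in>{1..d}. j \<noteq> a \<longrightarrow> l (e' j) = 0)
    \<and> (\<forall>j. l (e j) = 0 \<longrightarrow> e' j = e j)"
proof -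
  define c where "c j = l (e j) / l (e a)" for j
  let ?e = "\<lambda>j. if j = a then e a else (\<lambda>t. e j t - c j * e a t)"
  obtain x' where "coord_basis d ?e x'"
    using coord_basis_shear[OF B a] by blast
  moreover have "l (?e j) = 0" if "j \<noteq> a" for j
    using that la lin_fun_diff_scaled[OF l, of "e j" "c j" "e a"] by (simp add: c_def)
  moreover have "?e j = e j" if "l (e j) = 0" for j
    using that by (simp add: c_def)
  ultimately show ?thesis
    by (intro exI[of _ ?e] exI[of _ x']) auto
qed

definition coord_proj :: "nat set \<Rightarrow> (nat \<Rightarrow> 'n \<Rightarrow> 'a::field) \<Rightarrow> (nat \<Rightarrow> ('n \<Rightarrow> 'a) \<Rightarrow> 'a) \<Rightarrow> ('n \<Rightarrow> 'a) \<Rightarrow> 'n \<Rightarrow> 'a"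
  where "coord_proj S e x v = (\<lambda>t. \<Sum>j\<in>S. x j v * e j t)"

lemma coord_proj_empty: "coord_proj {} e x v = (\<lambda>t. 0)"
  by (simp add: coord_proj_def)

lemma coord_proj_insert:
  "finite S \<Longrightarrow> k \<notin> S \<Longrightarrow> coord_proj (insert k S) e x v = (\<lambda>t. x k v * e k t + coord_proj S e x v t)"
  by (simp add: coord_proj_def)

lemma coord_proj_all: "coord_basis d e x \<Longrightarrow> coord_proj {1..d} e x v = v"
  by (simp add: coord_proj_def fun_eq_iff coord_basis_expansion[of d e x v])

lemma coord_proj_split_first:
  assumes "coord_basis d e x" and "1 \<le> d"
  shows "(\<lambda>t. x 1 v * e 1 t + coord_proj {2..d} e x v t) = v"
proof
  fix t
  have "v t = (\<Sum>i=1..d. x i v * e i t)"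
    by (rule coord_basis_expansion[OF assms(1)])
  also have "\<dots> = x 1 v * e 1 t + (\<Sum>i=2..d. x i v * e i t)"
    by (subst sum.atLeast_Suc_atMost[OF assms(2)]) (simp add: numeral_2_eq_2)
  finally show "x 1 v * e 1 t + coord_proj {2..d} e x v t = v t"
    by (simp add: coord_proj_def)
qed

lemma coord_proj_Suc:
  "coord_proj {1..Suc m} e x = (\<lambda>v t. x (Suc m) v * e (Suc m) t + coord_proj {1..m} e x v t)"
  by (simp add: fun_eq_iff atLeastAtMostSuc_conv coord_proj_insert)

definition pairs_upto :: "nat \<Rightarrow> (nat \<times> nat) set" where
  "pairs_upto m = {(i, j). 1 \<le> i \<and> i < j \<and> j \<le> m}"

definition triples_upto :: "nat \<Rightarrow> (nat \<times> nat \<times> nat) set" where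
  "triples_upto m = {(i, j, l). 1 \<le> i \<and> i < j \<and> j < l \<and> l \<le> m}"

lemma finite_pairs_upto: "finite (pairs_upto m)"
  by (rule finite_subset[of _ "{1..m} \<times> {1..m}"]) (auto simp: pairs_upto_def)

lemma finite_triples_upto: "finite (triples_upto m)"
  by (rule finite_subset[of _ "{1..m} \<times> {1..m} \<times> {1..m}"]) (auto simp: triples_upto_def)

lemma pairs_upto_Suc: "pairs_upto (Suc m) = pairs_upto m \<union> (\<lambda>i. (i, Suc m)) ` {1..m}"
  by (auto simp: pairs_upto_def)

lemma triples_upto_Suc:
  "triples_upto (Suc m) = triples_upto m \<union> (\<lambda>(i, j). (i, j, Suc m)) ` pairs_upto m"
  by (auto simp: triples_upto_def pairs_upto_def image_iff le_Suc_eq)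

lemma pairs_upto_0: "pairs_upto 0 = {}"
  by (auto simp: pairs_upto_def)

lemma triples_upto_0: "triples_upto 0 = {}"
  by (auto simp: triples_upto_def)

lemma sum_pairs_upto_Suc:
  "(\<Sum>p\<in>pairs_upto (Suc m). f p) = (\<Sum>p\<in>pairs_upto m. f p) + (\<Sum>i=1..m. f (i, Suc m))"
proof -
  have "pairs_upto m \<inter> (\<lambda>i. (i, Suc m)) ` {1..m} = {}"
    by (auto simp: pairs_upto_def)
  moreover have "inj_on (\<lambda>i. (i, Suc m)) {1..m}"
    by (auto simp: inj_on_def)
  ultimately show ?thesis
    unfolding pairs_upto_Suc by (simp add: sum.union_disjoint finite_pairs_upto sum.reindex)
qed

lemma sum_triples_upto_Suc:
  "(\<Sum>t\<in>triples_upto (Suc m). f t) = (\<Sum>t\<in>triples_upto m. f t) + (\<Sum>(i, j)\<in>pairs_upto m. f (i, j, Suc m))"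
proof -
  have "triples_upto m \<inter> (\<lambda>(i, j). (i, j, Suc m)) ` pairs_upto m = {}"
    by (auto simp: triples_upto_def)
  moreover have "inj_on (\<lambda>(i, j). (i, j, Suc m)) (pairs_upto m)"
    by (auto simp: inj_on_def)
  ultimately show ?thesis
    unfolding triples_upto_Suc
    by (simp add: sum.union_disjoint finite_triples_upto finite_pairs_upto sum.reindex case_prod_unfold comp_def)
qed

section \<open>Symmetric trilinear forms\<close>

locale sym_trilinear =
  fixes phi :: "('n \<Rightarrow> 'a::field) list \<Rightarrow> 'a"
  assumes in_Dsp: "phi \<in> Dsp 3"
begin

lemma vanishes_off_length: "length us \<noteq> 3 \<Longrightarrow> phi us = 0"
  using in_Dsp by (simp add: Dsp_def)

lemma mset_cong: "mset us = mset vs \<Longrightarrow> phi us = phi vs"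
  using in_Dsp unfolding Dsp_def by blast

lemma swap_12: "phi [a, b, c] = phi [b, a, c]"
  by (rule mset_cong) (simp add: add_mset_commute)

lemma swap_23: "phi [a, b, c] = phi [a, c, b]"
  by (rule mset_cong) (simp add: add_mset_commute)

lemma swap_13: "phi [a, b, c] = phi [c, b, a]"
  by (rule mset_cong) (simp add: add_mset_commute)

lemma add_1: "phi [\<lambda>t. u t + v t, b, c] = phi [u, b, c] + phi [v, b, c]"
proof -
  have "\<forall>us j u v. length us = 3 \<longrightarrow> j < 3 \<longrightarrow>
      phi (us[j := (\<lambda>i. u i + v i)]) = phi (us[j := u]) + phi (us[j := v])"
    using in_Dsp unfolding Dsp_def by blast
  from this[rule_format, of "[u, b, c]" 0 u v] show ?thesis by simp
qed

lemma scale_1: "phi [\<lambda>t. k * u t, b, c] = k * phi [u, b, c]"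
proof -
  have "\<forall>us j c u. length us = 3 \<longrightarrow> j < 3 \<longrightarrow> phi (us[j := (\<lambda>i. c * u i)]) = c * phi (us[j := u])"
    using in_Dsp unfolding Dsp_def by blast
  from this[rule_format, of "[u, b, c]" 0 k u] show ?thesis by simp
qed

lemma add_2: "phi [a, \<lambda>t. u t + v t, c] = phi [a, u, c] + phi [a, v, c]"
  using swap_12[of a _ c] add_1[of u v a c] by simp

lemma add_3: "phi [a, b, \<lambda>t. u t + v t] = phi [a, b, u] + phi [a, b, v]"
  using swap_13[of a b] add_1[of u v b a] by simp

lemma scale_2: "phi [a, \<lambda>t. k * u t, c] = k * phi [a, u, c]"
  using swap_12[of a _ c] scale_1[of k u a c] by simp

lemma scale_3: "phi [a, b, \<lambda>t. k * u t] = k * phi [a, b, u]"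
  using swap_13[of a b] scale_1[of k u b a] by simp

lemma zero_2: "phi [a, \<lambda>t. 0, c] = 0"
  using scale_2[of a 0 a c] by simp

lemma zero_3: "phi [a, b, \<lambda>t. 0] = 0"
  using scale_3[of a b 0 a] by simp

lemma lin_fun_3: "lin_fun (\<lambda>v. phi [a, b, v])"
  unfolding lin_fun_def by (simp add: add_3 scale_3)

lemma lincomb_3: "finite S \<Longrightarrow> phi [a, b, \<lambda>t. \<Sum>i\<in>S. g i * f i t] = (\<Sum>i\<in>S. g i * phi [a, b, f i])"
  using lin_fun_sum[OF lin_fun_3] by blast

lemma expand_23:
  "phi [z, \<lambda>t. \<beta> * e t + B t, \<lambda>t. \<gamma> * e t + C t] =
     phi [z, B, C] + \<beta> * phi [z, e, C] + \<gamma> * phi [z, B, e] + \<beta> * \<gamma> * phi [z, e, e]"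
  by (simp add: add_2 add_3 scale_2 scale_3 algebra_simps)

lemma expand_123:
  "phi [\<lambda>t. \<alpha> * e t + A t, \<lambda>t. \<beta> * e t + B t, \<lambda>t. \<gamma> * e t + C t] =
     phi [A, B, C] + \<alpha> * phi [e, B, C] + \<beta> * phi [A, e, C] + \<gamma> * phi [A, B, e]
     + \<alpha> * \<beta> * phi [e, e, C] + \<alpha> * \<gamma> * phi [e, B, e] + \<beta> * \<gamma> * phi [A, e, e]
     + \<alpha> * \<beta> * \<gamma> * phi [e, e, e]"
  by (simp add: add_1 add_2 add_3 scale_1 scale_2 scale_3 algebra_simps)

text \<open>For \<open>P = coord_proj {2..d} e x\<close> and \<open>z = e 1\<close> these are the forms \<open>phi\<^sub>2\<^sub>0\<close> and
  \<open>phi\<^sub>3\<^sub>0\<close> of the decomposition, up to a scalar.\<close>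

definition pullback2 :: "('n \<Rightarrow> 'a) \<Rightarrow> (('n \<Rightarrow> 'a) \<Rightarrow> 'n \<Rightarrow> 'a) \<Rightarrow> ('n \<Rightarrow> 'a) list \<Rightarrow> 'a" where
  "pullback2 z P us = (if length us = 2 then phi (z # map P us) else 0)"

definition pullback3 :: "(('n \<Rightarrow> 'a) \<Rightarrow> 'n \<Rightarrow> 'a) \<Rightarrow> ('n \<Rightarrow> 'a) list \<Rightarrow> 'a" where
  "pullback3 P us = (if length us = 3 then phi (map P us) else 0)"

lemma pullback3_id: "pullback3 (\<lambda>v. v) = phi"
  by (rule ext) (simp add: pullback3_def vanishes_off_length)

lemma pullback2_extend:
  "pullback2 z (\<lambda>v t. \<xi> v * e t + P v t) = (\<lambda>us. pullback2 z P us
     + dmult 1 1 (dpow \<xi> 1) (dpow (\<lambda>v. phi [z, e, P v]) 1) us + phi [z, e, e] * dpow \<xi> 2 us)"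
proof (rule list_fun_eqI2)
  fix b c
  have "pullback2 z (\<lambda>v t. \<xi> v * e t + P v t) [b, c] = phi [z, \<lambda>t. \<xi> b * e t + P b t, \<lambda>t. \<xi> c * e t + P c t]"
    by (simp add: pullback2_def)
  also have "\<dots> = phi [z, P b, P c] + \<xi> b * phi [z, e, P c] + \<xi> c * phi [z, P b, e] + \<xi> b * \<xi> c * phi [z, e, e]"
    by (rule expand_23)
  also have "\<dots> = pullback2 z P [b, c]
     + dmult 1 1 (dpow \<xi> 1) (dpow (\<lambda>v. phi [z, e, P v]) 1) [b, c] + phi [z, e, e] * dpow \<xi> 2 [b, c]"
    unfolding dmult_1_1 using swap_23[of z "P b" e] by (simp add: pullback2_def dpow_def algebra_simps)
  finally show "pullback2 z (\<lambda>v t. \<xi> v * e t + P v t) [b, c] = \<dots>" .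
qed (simp add: pullback2_def dmult_eq_0_if_length_ne dpow_def)

lemma pullback3_extend:
  "pullback3 (\<lambda>v t. \<xi> v * e t + P v t) = (\<lambda>us. pullback3 P us
     + dmult 1 2 (dpow \<xi> 1) (pullback2 e P) us
     + dmult 2 1 (dpow \<xi> 2) (dpow (\<lambda>v. phi [e, e, P v]) 1) us + phi [e, e, e] * dpow \<xi> 3 us)"
proof (rule list_fun_eqI3)
  fix a b c
  have "pullback3 (\<lambda>v t. \<xi> v * e t + P v t) [a, b, c]
      = phi [\<lambda>t. \<xi> a * e t + P a t, \<lambda>t. \<xi> b * e t + P b t, \<lambda>t. \<xi> c * e t + P c t]"
    by (simp add: pullback3_def)
  also have "\<dots> = phi [P a, P b, P c] + \<xi> a * phi [e, P b, P c] + \<xi> b * phi [P a, e, P c]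
      + \<xi> c * phi [P a, P b, e] + \<xi> a * \<xi> b * phi [e, e, P c] + \<xi> a * \<xi> c * phi [e, P b, e]
      + \<xi> b * \<xi> c * phi [P a, e, e] + \<xi> a * \<xi> b * \<xi> c * phi [e, e, e]"
    by (rule expand_123)
  also have "\<dots> = pullback3 P [a, b, c] + dmult 1 2 (dpow \<xi> 1) (pullback2 e P) [a, b, c]
     + dmult 2 1 (dpow \<xi> 2) (dpow (\<lambda>v. phi [e, e, P v]) 1) [a, b, c] + phi [e, e, e] * dpow \<xi> 3 [a, b, c]"
    unfolding dmult_1_2 dmult_2_1
    using swap_12[of "P a" e "P c"] swap_13[of "P a" "P b" e] swap_23[of e "P b" "P a"]
      swap_23[of e "P b" e] swap_13[of "P a" e e]
    by (simp add: pullback3_def pullback2_def dpow_def algebra_simps)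
  finally show "pullback3 (\<lambda>v t. \<xi> v * e t + P v t) [a, b, c] = \<dots>" .
qed (simp add: pullback3_def dmult_eq_0_if_length_ne dpow_def)

lemma pullback2_in_Dsub:
  assumes "finite S" and "S \<subseteq> {2..d}"
  shows "pullback2 z (coord_proj S e x) \<in> Dsub 2 (span_from2 d x)"
  using assms
proof (induction S rule: finite_induct)
  case empty
  have "pullback2 z (coord_proj {} e x) = (\<lambda>us. 0)"
    by (rule list_fun_eqI2) (simp_all add: pullback2_def coord_proj_empty zero_3)
  then show ?case
    using Dsub_zero by metis
next
  case (insert k S)
  then have k: "x k \<in> span_from2 d x"
    using span_from2_basis by blast
  have "(\<lambda>v. phi [z, e k, coord_proj S e x v]) = (\<lambda>v. \<Sum>j\<in>S. phi [z, e k, e j] * x j v)"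
    unfolding coord_proj_def lincomb_3[OF insert.hyps(1)] by (simp add: mult.commute)
  then have "(\<lambda>v. phi [z, e k, coord_proj S e x v]) \<in> span_from2 d x"
    using span_from2_lincomb insert.prems by auto
  then have "(\<lambda>us. pullback2 z (coord_proj S e x) us
     + dmult 1 1 (dpow (x k) 1) (dpow (\<lambda>v. phi [z, e k, coord_proj S e x v]) 1) us
     + phi [z, e k, e k] * dpow (x k) 2 us) \<in> Dsub 2 (span_from2 d x)"
    using insert k by (intro Dsub_add Dsub_scale dpow_in_Dsub dmult_dpow_in_Dsub) auto
  then show ?case
    using insert.hyps by (simp add: coord_proj_insert pullback2_extend)
qed

lemma pullback3_in_Dsub:
  assumes "finite S" and "S \<subseteq> {2..d}"
  shows "pullback3 (coord_proj S e x) \<in> Dsub 3 (span_from2 d x)"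
  using assms
proof (induction S rule: finite_induct)
  case empty
  have "pullback3 (coord_proj {} e x) = (\<lambda>us. 0)"
    by (rule list_fun_eqI3) (simp_all add: pullback3_def coord_proj_empty zero_3)
  then show ?case
    using Dsub_zero by metis
next
  case (insert k S)
  then have k: "x k \<in> span_from2 d x"
    using span_from2_basis by blast
  have "(\<lambda>v. phi [e k, e k, coord_proj S e x v]) = (\<lambda>v. \<Sum>j\<in>S. phi [e k, e k, e j] * x j v)"
    unfolding coord_proj_def lincomb_3[OF insert.hyps(1)] by (simp add: mult.commute)
  then have "(\<lambda>v. phi [e k, e k, coord_proj S e x v]) \<in> span_from2 d x"
    using span_from2_lincomb insert.prems by auto
  moreover have "pullback2 (e k) (coord_proj S e x) \<in> Dsub 2 (span_from2 d x)"
    using insert by (intro pullback2_in_Dsub) auto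
  ultimately have "(\<lambda>us. pullback3 (coord_proj S e x) us
     + dmult 1 2 (dpow (x k) 1) (pullback2 (e k) (coord_proj S e x)) us
     + dmult 2 1 (dpow (x k) 2) (dpow (\<lambda>v. phi [e k, e k, coord_proj S e x v]) 1) us
     + phi [e k, e k, e k] * dpow (x k) 3 us) \<in> Dsub 3 (span_from2 d x)"
    using insert k
    by (intro Dsub_add Dsub_scale dpow_in_Dsub dmult_dpow_in_Dsub) auto
  then show ?case
    using insert.hyps by (simp add: coord_proj_insert pullback3_extend)
qed

lemma decomposition:
  assumes "coord_basis d e x" and "1 \<le> d"
  shows "phi = (\<lambda>us. pullback3 (coord_proj {2..d} e x) us
     + dmult 1 2 (dpow (x 1) 1) (pullback2 (e 1) (coord_proj {2..d} e x)) us
     + dmult 2 1 (dpow (x 1) 2) (dpow (\<lambda>v. phi [e 1, e 1, coord_proj {2..d} e x v]) 1) us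
     + phi [e 1, e 1, e 1] * dpow (x 1) 3 us)"
proof -
  have "phi = pullback3 (\<lambda>v t. x 1 v * e 1 t + coord_proj {2..d} e x v t)"
    using pullback3_id coord_proj_split_first[OF assms] by simp
  also note pullback3_extend
  finally show ?thesis .
qed

text \<open>Case (a) is the instance \<open>m = 0\<close>, case (b) the one with \<open>phi [e 1, e 1, e 1] = 0\<close>.\<close>

lemma normal_form:
  assumes B: "coord_basis d e x" and d: "1 \<le> d"
    and L: "\<And>v. phi [e 1, e 1, coord_proj {2..d} e x v] = m * x 2 v"
  shows "\<exists>phi20 phi30. phi20 \<in> Dsub 2 (span_from2 d x) \<and> phi30 \<in> Dsub 3 (span_from2 d x) \<and>
    (\<lambda>us. \<alpha> * phi us) = (\<lambda>us. \<alpha> * phi [e 1, e 1, e 1] * dpow (x 1) 3 us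
       + \<alpha> * m * dmult 2 1 (dpow (x 1) 2) (dpow (x 2) 1) us + dmult 1 2 (dpow (x 1) 1) phi20 us + phi30 us)"
proof (intro exI conjI)
  let ?P = "coord_proj {2..d} e x"
  show "(\<lambda>us. \<alpha> * pullback2 (e 1) ?P us) \<in> Dsub 2 (span_from2 d x)"
    by (intro Dsub_scale pullback2_in_Dsub) auto
  show "(\<lambda>us. \<alpha> * pullback3 ?P us) \<in> Dsub 3 (span_from2 d x)"
    by (intro Dsub_scale pullback3_in_Dsub) auto
  have "dpow (\<lambda>v. phi [e 1, e 1, ?P v]) 1 = (\<lambda>us. m * dpow (x 2) 1 us)"
    unfolding L by (rule dpow_scale_1)
  then show "(\<lambda>us. \<alpha> * phi us) = (\<lambda>us. \<alpha> * phi [e 1, e 1, e 1] * dpow (x 1) 3 us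
       + \<alpha> * m * dmult 2 1 (dpow (x 1) 2) (dpow (x 2) 1) us
       + dmult 1 2 (dpow (x 1) 1) (\<lambda>us. \<alpha> * pullback2 (e 1) ?P us) us + \<alpha> * pullback3 ?P us)"
    by (subst decomposition[OF B d]) (simp add: dmult_scale_right algebra_simps)
qed

lemma nonzero_if_phi_nonzero: "phi [u, u, w] \<noteq> 0 \<Longrightarrow> u \<noteq> (\<lambda>t. 0)"
  using zero_2[of "\<lambda>t. 0" w] by auto

lemma cube_case:
  fixes e0 :: "nat \<Rightarrow> 'n \<Rightarrow> 'a"
  assumes B0: "coord_basis d e0 x0" and d: "1 \<le> d" and u: "phi [u, u, u] \<noteq> 0"
  shows "\<exists>alpha xs. alpha \<noteq> 0 \<and> is_dual_basis d xs \<and>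
    (\<exists>phi20 phi30. phi20 \<in> Dsub 2 (span_from2 d xs) \<and> phi30 \<in> Dsub 3 (span_from2 d xs) \<and>
       (\<lambda>us. alpha * phi us) = (\<lambda>us. dpow (xs 1) 3 us + dmult 1 2 (dpow (xs 1) 1) phi20 us + phi30 us))"
proof -
  have one: "1 \<in> {1..d}"
    using d by simp
  obtain e1 x1 where B1: "coord_basis d e1 x1" and "e1 1 = u"
    using coord_basis_with_first[OF B0 d nonzero_if_phi_nonzero[OF u]] by blast
  then obtain e x where B: "coord_basis d e x" and e1: "e 1 = u"
    and ker: "\<forall>j\<in>{1..d}. j \<noteq> 1 \<longrightarrow> phi [u, u, e j] = 0"
    using coord_basis_annihilate[OF B1 one lin_fun_3] u by metis
  have "phi [e 1, e 1, coord_proj {2..d} e x v] = 0 * x 2 v" for v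
    using ker unfolding e1 coord_proj_def lincomb_3[OF finite_atLeastAtMost] by simp
  from normal_form[OF B d this, of "1 / phi [u, u, u]"] u e1 coord_basis_is_dual_basis[OF B]
  show ?thesis
    by (intro exI[of _ "1 / phi [u, u, u]"] exI[of _ x]) auto
qed

lemma square_case:
  fixes e0 :: "nat \<Rightarrow> 'n \<Rightarrow> 'a"
  assumes B0: "coord_basis d e0 x0" and d: "1 \<le> d"
    and no_cube: "\<forall>v. phi [v, v, v] = 0" and uw: "phi [u, u, w] \<noteq> 0"
  shows "\<exists>alpha xs. alpha \<noteq> 0 \<and> is_dual_basis d xs \<and> 2 \<le> d \<and>
    (\<exists>phi20 phi30. phi20 \<in> Dsub 2 (span_from2 d xs) \<and> phi30 \<in> Dsub 3 (span_from2 d xs) \<and>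
       (\<lambda>us. alpha * phi us) = (\<lambda>us. dmult 2 1 (dpow (xs 1) 2) (dpow (xs 2) 1) us
               + dmult 1 2 (dpow (xs 1) 1) phi20 us + phi30 us))"
proof -
  obtain e1 x1 where B1: "coord_basis d e1 x1" and e11: "e1 1 = u"
    using coord_basis_with_first[OF B0 d nonzero_if_phi_nonzero[OF uw]] by blast
  obtain j where j: "j \<in> {1..d}" and uuj: "phi [u, u, e1 j] \<noteq> 0"
    using uw lin_fun_coord_expansion[OF B1 lin_fun_3, of u u w] by (force intro: sum.neutral)
  have "j \<noteq> 1"
    using uuj no_cube e11 by auto
  with j have d2: "2 \<le> d" and two: "2 \<in> {1..d}"
    by auto
  let ?p = "transpose j 2"
  have B2: "coord_basis d (e1 \<circ> ?p) (x1 \<circ> ?p)"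
    by (rule coord_basis_permute[OF B1 permutes_swap_id[OF j two]])
  have "(e1 \<circ> ?p) 1 = u" "phi [u, u, (e1 \<circ> ?p) 2] \<noteq> 0"
    using \<open>j \<noteq> 1\<close> e11 uuj by (simp_all add: transpose_def)
  then obtain e x where B: "coord_basis d e x" and e1: "e 1 = u"
    and ker: "\<forall>k\<in>{1..d}. k \<noteq> 2 \<longrightarrow> phi [u, u, e k] = 0" and m: "phi [u, u, e 2] \<noteq> 0"
    using coord_basis_annihilate[OF B2 two lin_fun_3, of u u] no_cube by metis
  let ?m = "phi [u, u, e 2]"
  have "phi [e 1, e 1, coord_proj {2..d} e x v] = ?m * x 2 v" for v
  proof -
    have "phi [e 1, e 1, coord_proj {2..d} e x v] = (\<Sum>k=2..d. x k v * phi [u, u, e k])"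
      unfolding e1 coord_proj_def lincomb_3[OF finite_atLeastAtMost] ..
    also have "\<dots> = (\<Sum>k=2..d. if k = 2 then x 2 v * ?m else 0)"
      by (rule sum.cong) (use ker in auto)
    finally show ?thesis
      using d2 by (simp add: mult.commute)
  qed
  from normal_form[OF B d this, of "1 / ?m"] m e1 no_cube d2 coord_basis_is_dual_basis[OF B]
  show ?thesis
    by (intro exI[of _ "1 / ?m"] exI[of _ x]) auto
qed

lemma alternating_pair_expansion:
  assumes alt: "\<forall>u v. phi [u, u, v] = 0"
  shows "phi [z, coord_proj {1..m} e x b, coord_proj {1..m} e x c] =
    (\<Sum>(i, j)\<in>pairs_upto m. phi [z, e i, e j] * (x i b * x j c + x j b * x i c))"
proof (induction m)
  case 0
  then show ?case
    by (simp add: pairs_upto_0 coord_proj_empty zero_3)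
next
  case (Suc m)
  let ?E = "e (Suc m)" and ?P = "coord_proj {1..m} e x"
  have EE: "phi [z, ?E, ?E] = 0"
    using alt swap_13[of z ?E ?E] by simp
  have lin: "phi [z, ?E, ?P v] = (\<Sum>i=1..m. x i v * phi [z, e i, ?E])" for v
    unfolding coord_proj_def lincomb_3[OF finite_atLeastAtMost] by (rule sum.cong) (simp_all add: swap_23)
  have "phi [z, coord_proj {1..Suc m} e x b, coord_proj {1..Suc m} e x c]
      = phi [z, ?P b, ?P c] + x (Suc m) b * phi [z, ?E, ?P c] + x (Suc m) c * phi [z, ?E, ?P b]"
    unfolding coord_proj_Suc expand_23 EE using swap_23[of z "?P b" ?E] by simp
  also have "\<dots> = (\<Sum>(i, j)\<in>pairs_upto m. phi [z, e i, e j] * (x i b * x j c + x j b * x i c))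
      + (\<Sum>i=1..m. phi [z, e i, ?E] * (x i b * x (Suc m) c + x (Suc m) b * x i c))"
  proof -
    have "(\<Sum>i=1..m. phi [z, e i, ?E] * (x i b * x (Suc m) c + x (Suc m) b * x i c))
      = x (Suc m) b * (\<Sum>i=1..m. x i c * phi [z, e i, ?E]) + x (Suc m) c * (\<Sum>i=1..m. x i b * phi [z, e i, ?E])"
      by (simp add: sum_distrib_left sum.distrib[symmetric] algebra_simps)
    then show ?thesis
      unfolding Suc.IH lin by (simp add: add.assoc)
  qed
  finally show ?case
    by (simp add: sum_pairs_upto_Suc)
qed

lemma alternating_triple_expansion:
  assumes alt: "\<forall>u v. phi [u, u, v] = 0"
  shows "phi [coord_proj {1..m} e x a, coord_proj {1..m} e x b, coord_proj {1..m} e x c] =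
    (\<Sum>(i, j, l)\<in>triples_upto m.
       phi [e i, e j, e l] * dmult 1 2 (dpow (x i) 1) (dmult 1 1 (dpow (x j) 1) (dpow (x l) 1)) [a, b, c])"
proof (induction m)
  case 0
  then show ?case
    by (simp add: triples_upto_0 coord_proj_empty zero_3)
next
  case (Suc m)
  let ?E = "e (Suc m)" and ?P = "coord_proj {1..m} e x"
  have vanish: "phi [?E, ?E, w] = 0" "phi [?E, w, ?E] = 0" "phi [w, ?E, ?E] = 0" for w
    using alt swap_23[of ?E w ?E] swap_13[of w ?E ?E] by simp_all
  have E_first: "phi [w, ?E, w'] = phi [?E, w, w']" "phi [w, w', ?E] = phi [?E, w, w']" for w w'
    using swap_12[of w ?E w'] swap_13[of w w' ?E] swap_23[of ?E w' w] by simp_all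
  have pair: "phi [?E, ?P v, ?P w] = (\<Sum>(i, j)\<in>pairs_upto m. phi [e i, e j, ?E] * (x i v * x j w + x j v * x i w))"
    for v w
    by (simp only: alternating_pair_expansion[OF alt] E_first(2))
  have "phi [coord_proj {1..Suc m} e x a, coord_proj {1..Suc m} e x b, coord_proj {1..Suc m} e x c]
      = phi [?P a, ?P b, ?P c] + x (Suc m) a * phi [?E, ?P b, ?P c] + x (Suc m) b * phi [?E, ?P a, ?P c]
        + x (Suc m) c * phi [?E, ?P a, ?P b]"
    unfolding coord_proj_Suc expand_123 vanish E_first(1)[of "?P a" "?P c"] E_first(2)[of "?P a" "?P b"]
    by simp
  also have "\<dots> = (\<Sum>(i, j, l)\<in>triples_upto m.
       phi [e i, e j, e l] * dmult 1 2 (dpow (x i) 1) (dmult 1 1 (dpow (x j) 1) (dpow (x l) 1)) [a, b, c])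
     + (\<Sum>(i, j)\<in>pairs_upto m.
       phi [e i, e j, ?E] * dmult 1 2 (dpow (x i) 1) (dmult 1 1 (dpow (x j) 1) (dpow (x (Suc m)) 1)) [a, b, c])"
    unfolding Suc.IH pair sum_dmult_1_2_dpow_last by (simp add: add.assoc)
  finally show ?case
    by (simp add: sum_triples_upto_Suc)
qed

lemma CHAR_eq_2_if_alternating:
  assumes alt: "\<forall>u v. phi [u, u, v] = 0" and nonzero: "phi \<noteq> (\<lambda>us. 0)"
  shows "CHAR('a) = 2"
proof -
  have "(2::'a) = 0"
  proof (rule ccontr)
    assume two: "(2::'a) \<noteq> 0"
    have "2 * phi [a, b, c] = 0" for a b c
    proof -
      have "0 = phi [\<lambda>t. a t + b t, \<lambda>t. a t + b t, c]"
        using alt by simp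
      also have "\<dots> = phi [a, a, c] + phi [a, b, c] + (phi [b, a, c] + phi [b, b, c])"
        by (simp add: add_1 add_2)
      also have "\<dots> = 2 * phi [a, b, c]"
        using alt swap_12[of b a c] by simp
      finally show ?thesis by simp
    qed
    with two have "phi = (\<lambda>us. 0)"
      by (intro list_fun_eqI3) (simp_all add: vanishes_off_length)
    with nonzero show False ..
  qed
  then have "of_nat 2 = (0::'a)"
    by simp
  then have "CHAR('a) dvd 2"
    by (simp only: of_nat_eq_0_iff_char_dvd)
  moreover from this have "0 < CHAR('a)" "CHAR('a) \<le> 2"
    by (auto intro: dvd_imp_le Nat.gr0I)
  ultimately show ?thesis
    using CHAR_not_1[where 'a = 'a] by linarith
qed

lemma alternating_expansion:
  assumes B: "coord_basis d e x" and alt: "\<forall>u v. phi [u, u, v] = 0"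
  shows "phi = (\<lambda>us. \<Sum>(i, j, l)\<in>triples_upto d.
    phi [e i, e j, e l] * dmult 1 2 (dpow (x i) 1) (dmult 1 1 (dpow (x j) 1) (dpow (x l) 1)) us)"
proof (rule list_fun_eqI3)
  fix a b c
  show "phi [a, b, c] = (\<Sum>(i, j, l)\<in>triples_upto d.
    phi [e i, e j, e l] * dmult 1 2 (dpow (x i) 1) (dmult 1 1 (dpow (x j) 1) (dpow (x l) 1)) [a, b, c])"
    using alternating_triple_expansion[OF alt, of d e x a b c] unfolding coord_proj_all[OF B] .
qed (simp add: vanishes_off_length dmult_eq_0_if_length_ne)

lemma alternating_case:
  assumes "coord_basis d e x" and "\<forall>u v. phi [u, u, v] = 0" and "phi \<noteq> (\<lambda>us. 0)"
  shows "CHAR('a) = 2 \<and> (\<exists>c :: nat \<Rightarrow> nat \<Rightarrow> nat \<Rightarrow> 'a.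
    phi = (\<lambda>us. \<Sum>(i, j, l)\<in>{(i, j, l). 1 \<le> i \<and> i < j \<and> j < l \<and> l \<le> d}.
      c i j l * dmult 1 2 (dpow (x i) 1) (dmult 1 1 (dpow (x j) 1) (dpow (x l) 1)) us))"
  using CHAR_eq_2_if_alternating[OF assms(2,3)] alternating_expansion[OF assms(1,2)]
  unfolding triples_upto_def by (intro conjI exI[of _ "\<lambda>i j l. phi [e i, e j, e l]"])

end

theorem lemma3p1:
  fixes phi3 :: "('n::finite \<Rightarrow> 'a::field) list \<Rightarrow> 'a"
  assumes "phi3 \<in> Dsp 3"
    and "phi3 \<noteq> (\<lambda>us. 0)"
  shows "\<exists>(alpha::'a) xs. alpha \<noteq> 0 \<and> is_dual_basis CARD('n) xs \<and>
    ((\<exists>phi20 phi30. phi20 \<in> Dsub 2 (span_from2 CARD('n) xs) \<and>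
                    phi30 \<in> Dsub 3 (span_from2 CARD('n) xs) \<and>
       (\<lambda>us. alpha * phi3 us) =
         (\<lambda>us. dpow (xs 1) 3 us + dmult 1 2 (dpow (xs 1) 1) phi20 us + phi30 us))
   \<or> (2 \<le> CARD('n) \<and> (\<exists>phi20 phi30. phi20 \<in> Dsub 2 (span_from2 CARD('n) xs) \<and>
                    phi30 \<in> Dsub 3 (span_from2 CARD('n) xs) \<and>
       (\<lambda>us. alpha * phi3 us) =
         (\<lambda>us. dmult 2 1 (dpow (xs 1) 2) (dpow (xs 2) 1) us
               + dmult 1 2 (dpow (xs 1) 1) phi20 us + phi30 us)))
   \<or> (CHAR('a) = 2 \<and> (\<exists>c :: nat \<Rightarrow> nat \<Rightarrow> nat \<Rightarrow> 'a.
       phi3 = (\<lambda>us. \<Sum>(i, j, l)\<in>{(i, j, l). 1 \<le> i \<and> i < j \<and> j < l \<and> l \<le> CARD('n)}.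
                 c i j l * dmult 1 2 (dpow (xs i) 1)
                                     (dmult 1 1 (dpow (xs j) 1) (dpow (xs l) 1)) us))))"
proof -
  interpret sym_trilinear phi3
    by unfold_locales (rule assms(1))
  obtain e x where B: "coord_basis CARD('n) e (x :: nat \<Rightarrow> ('n \<Rightarrow> 'a) \<Rightarrow> 'a)"
    using coord_basis_exists by blast
  have d: "1 \<le> CARD('n)"
    by (simp add: Suc_le_eq)
  consider (cube) u where "phi3 [u, u, u] \<noteq> 0"
    | (square) u w where "\<forall>v. phi3 [v, v, v] = 0" "phi3 [u, u, w] \<noteq> 0"
    | (alternating) "\<forall>u v. phi3 [u, u, v] = 0"
    by fast
  then show ?thesis
  proof cases
    case cube
    then show ?thesis
      using cube_case[OF B d] by meson
  next
    case square
    then show ?thesis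
      using square_case[OF B d] by meson
  next
    case alternating
    then show ?thesis
      using alternating_case[OF B alternating assms(2)] coord_basis_is_dual_basis[OF B]
      by (intro exI[of _ 1] exI[of _ x] conjI disjI2) simp_all
  qed
qed

end
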